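(* Let $\mathbb G=V_1\times V_2$ be a step-two Carnot group that has $\mathbb F_3$ as one of its quotients, i.e. there is a surjective Carnot morphism $\mathbb G\to\mathbb F_3$. Then $\mathcal A(V_1\times V_2)\subsetneq\mathcal A_h(\mathbb G)$.
   Context: A step-two Carnot group is $\mathbb G=V_1\times V_2$ ($V_1,V_2$ finite-dimensional real vector spaces, $V_2\ne\{0\}$) with a bilinear skew-symmetric $[\cdot,\cdot]:V_1\times V_1\to V_2$ whose image spans $V_2$, and group law $(x,z)\cdot(x',z')=(x+x',z+z'+[x,x'])$. $\mathbb F_3=\Lambda^1(\mathbb R^3)\times\Lambda^2(\mathbb R^3)$ with bracket $[\theta,\theta']=\theta\wedge\theta'$. A Carnot morphism $\pi:\mathbb G\to\mathbb G'$ is $\pi(x,z)=(\pi_1(x),\pi_2(z))$ with $\pi_1,\pi_2$ linear and $\pi_2([x,y])=[\pi_1(x),\pi_1(y)]'$. $\mathcal A_h(\mathbb G)$ is the space of maps $f:\mathbb G\to\mathbb R$ such that for all $(x,z)\in\mathbb G$, $y\in V_1$, $t\mapsto f((x,z)\cdot(ty,0))$ is affine; $\mathcal A(V_1\times V_2)$ is the space of maps affine in the usual sense on $V_1\times V_2$ (always a subspace of $\mathcal A_h(\mathbb G)$). *)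

theory Defs
  imports "HOL-Analysis.Analysis"
begin

text \<open>A step-two Carnot group G = V1 x V2 is encoded by its bracket
  br :: V1 => V1 => V2, with V1, V2 finite-dimensional real vector spaces
  (Euclidean-space types).\<close>

definition step2_carnot :: "('a::euclidean_space \<Rightarrow> 'a \<Rightarrow> 'b::euclidean_space) \<Rightarrow> bool" where
  "step2_carnot br \<longleftrightarrow>
     bilinear br \<and> (\<forall>x y. br x y = - br y x) \<and>
     span (range (\<lambda>(x, y). br x y)) = UNIV \<and> (UNIV :: 'b set) \<noteq> {0}"

definition cmult :: "('a::real_vector \<Rightarrow> 'a \<Rightarrow> 'b::real_vector) \<Rightarrow> 'a \<times> 'b \<Rightarrow> 'a \<times> 'b \<Rightarrow> 'a \<times> 'b" where
  "cmult br p q = (fst p + fst q, snd p + snd q + br (fst p) (fst q))"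

text \<open>Lambda^1(R^3) is real^3 (coordinates w.r.t. e1,e2,e3); Lambda^2(R^3) is
  real^3 with coordinates w.r.t. the basis e1/\e2, e1/\e3, e2/\e3 (in this order).\<close>
definition f3_wedge :: "real^3 \<Rightarrow> real^3 \<Rightarrow> real^3" where
  "f3_wedge u v = vector [u$1 * v$2 - u$2 * v$1,
                          u$1 * v$3 - u$3 * v$1,
                          u$2 * v$3 - u$3 * v$2]"

definition surj_carnot_morphism_F3 ::
  "('a::euclidean_space \<Rightarrow> 'a \<Rightarrow> 'b::euclidean_space) \<Rightarrow> ('a \<Rightarrow> real^3) \<Rightarrow> ('b \<Rightarrow> real^3) \<Rightarrow> bool" where
  "surj_carnot_morphism_F3 br p1 p2 \<longleftrightarrow>
     linear p1 \<and> linear p2 \<and> (\<forall>x y. p2 (br x y) = f3_wedge (p1 x) (p1 y)) \<and>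
     surj (\<lambda>(x, z). (p1 x, p2 z))"

definition affine_fun_real :: "(real \<Rightarrow> real) \<Rightarrow> bool" where
  "affine_fun_real g \<longleftrightarrow> (\<exists>a b. \<forall>t. g t = a + b * t)"

definition horiz_affine :: "('a::real_vector \<Rightarrow> 'a \<Rightarrow> 'b::real_vector) \<Rightarrow> ('a \<times> 'b \<Rightarrow> real) \<Rightarrow> bool" where
  "horiz_affine br f \<longleftrightarrow>
     (\<forall>p y. affine_fun_real (\<lambda>t. f (cmult br p (t *\<^sub>R y, 0))))"

definition affine_map_on :: "('v::real_vector \<Rightarrow> real) \<Rightarrow> bool" where
  "affine_map_on f \<longleftrightarrow> (\<exists>l c. linear l \<and> (\<forall>p. f p = l p + c))"

end

theory Submission
  imports Defs
begin

text \<open>On F3 let \<open>V x z\<close> (below \<open>f3_volume\<close>) be the coefficient of \<open>e1 \<and> e2 \<and> e3\<close>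
  in \<open>x \<and> z\<close>. Along the horizontal line \<open>t \<mapsto> (x + t y, z + t x \<and> y)\<close> its quadratic
  term is \<open>y \<and> x \<and> y = 0\<close>, so \<open>V\<close> is horizontally affine; being a nonzero bilinear form
  it is not affine. Pulled back along a surjective Carnot morphism G \<rightarrow> F3 it stays
  horizontally affine and non-affine, while affine maps are always horizontally affine.\<close>

definition f3_volume :: "real^3 \<Rightarrow> real^3 \<Rightarrow> real" where
  "f3_volume x z = x$1 * z$3 - x$2 * z$2 + x$3 * z$1"

lemma f3_volume_horizontal_line:
  "f3_volume (x + t *\<^sub>R y) (z + t *\<^sub>R f3_wedge x y) = f3_volume x z + t * f3_volume y z"
  unfolding f3_volume_def f3_wedge_def by (simp add: algebra_simps)

lemma f3_wedge_scaleR_right: "f3_wedge x (t *\<^sub>R y) = t *\<^sub>R f3_wedge x y"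
  by (simp add: f3_wedge_def vec_eq_iff forall_3 algebra_simps)

lemma horiz_affine_f3_volume: "horiz_affine f3_wedge (case_prod f3_volume)"
  unfolding horiz_affine_def affine_fun_real_def
proof (intro allI)
  fix p :: "(real^3) \<times> (real^3)" and y
  have "case_prod f3_volume (cmult f3_wedge p (t *\<^sub>R y, 0)) =
      f3_volume (fst p) (snd p) + f3_volume y (snd p) * t" for t
    by (simp add: cmult_def case_prod_beta f3_wedge_scaleR_right f3_volume_horizontal_line)
  then show "\<exists>a b. \<forall>t. case_prod f3_volume (cmult f3_wedge p (t *\<^sub>R y, 0)) = a + b * t"
    by blast
qed

lemma affine_map_on_imp_horiz_affine:
  assumes "bilinear br" and "affine_map_on f"
  shows "horiz_affine br f"
  unfolding horiz_affine_def affine_fun_real_def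
proof (intro allI)
  fix p y
  from assms(2) obtain l c where l: "linear l" and f: "\<And>p. f p = l p + c"
    unfolding affine_map_on_def by blast
  have line: "cmult br p (t *\<^sub>R y, 0) = p + t *\<^sub>R (y, br (fst p) y)" for t
    using bilinear_rmul[OF assms(1)] by (cases p) (simp add: cmult_def)
  have "f (cmult br p (t *\<^sub>R y, 0)) = l p + t *\<^sub>R l (y, br (fst p) y) + c" for t
    by (simp only: line f linear_add[OF l] linear_scale[OF l])
  then have "f (cmult br p (t *\<^sub>R y, 0)) = f p + l (y, br (fst p) y) * t" for t
    by (simp add: f)
  then show "\<exists>a b. \<forall>t. f (cmult br p (t *\<^sub>R y, 0)) = a + b * t"
    by blast
qed

lemma affine_map_on_parallelogram:
  assumes "affine_map_on f"
  shows "f (u + v) + f 0 = f u + f v"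
  using assms unfolding affine_map_on_def by (auto simp: linear_add linear_0)

lemma cmult_map_prod_carnot_morphism:
  assumes "linear p1" and "linear p2" and "\<And>x y. p2 (br x y) = br' (p1 x) (p1 y)"
  shows "map_prod p1 p2 (cmult br p q) = cmult br' (map_prod p1 p2 p) (map_prod p1 p2 q)"
  using assms by (simp add: cmult_def linear_add)

lemma horiz_affine_comp_carnot_morphism:
  assumes "linear p1" and "linear p2" and "\<And>x y. p2 (br x y) = br' (p1 x) (p1 y)"
    and "horiz_affine br' f"
  shows "horiz_affine br (f \<circ> map_prod p1 p2)"
  unfolding horiz_affine_def
proof (intro allI)
  fix p y
  have "map_prod p1 p2 (t *\<^sub>R y, 0) = (t *\<^sub>R p1 y, 0)" for t
    using assms(1,2) by (simp add: linear_scale linear_0)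
  then have along: "(f \<circ> map_prod p1 p2) (cmult br p (t *\<^sub>R y, 0)) =
      f (cmult br' (map_prod p1 p2 p) (t *\<^sub>R p1 y, 0))" for t
    by (simp add: cmult_map_prod_carnot_morphism[of p1 p2 br br', OF assms(1-3)])
  show "affine_fun_real (\<lambda>t. (f \<circ> map_prod p1 p2) (cmult br p (t *\<^sub>R y, 0)))"
    unfolding along using assms(4) unfolding horiz_affine_def by blast
qed

lemma not_affine_map_on_f3_volume_comp:
  assumes "linear p1" and "linear p2" and "surj (map_prod p1 p2)"
  shows "\<not> affine_map_on (case_prod f3_volume \<circ> map_prod p1 p2)"
    (is "\<not> affine_map_on ?F")
proof
  assume "affine_map_on ?F"
  obtain u where u: "map_prod p1 p2 u = (vector [1, 0, 0], 0)"
    using surjD[OF assms(3)] by metis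
  obtain v where v: "map_prod p1 p2 v = (0, vector [0, 0, 1])"
    using surjD[OF assms(3)] by metis
  have "?F (u + v) + ?F 0 = ?F u + ?F v"
    using \<open>affine_map_on ?F\<close> by (rule affine_map_on_parallelogram)
  moreover have "?F (u + v) = 1" and "?F u = 0" and "?F v = 0" and "?F 0 = 0"
    using u v assms(1,2)
    by (simp_all add: f3_volume_def map_prod_def case_prod_beta linear_add linear_0)
  ultimately show False
    by simp
qed

theorem corollary6p6:
  fixes br :: "'a::euclidean_space \<Rightarrow> 'a \<Rightarrow> 'b::euclidean_space"
  assumes "step2_carnot br"
    and "\<exists>p1 p2. surj_carnot_morphism_F3 br p1 p2"
  shows "{f :: 'a \<times> 'b \<Rightarrow> real. affine_map_on f} \<subset> {f. horiz_affine br f}"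
proof -
  obtain p1 p2 where "linear p1" and "linear p2"
    and wedge: "\<And>x y. p2 (br x y) = f3_wedge (p1 x) (p1 y)"
    and surj: "surj (map_prod p1 p2)"
    using assms(2) unfolding surj_carnot_morphism_F3_def map_prod_def by blast
  let ?F = "case_prod f3_volume \<circ> map_prod p1 p2"
  have "bilinear br"
    using assms(1) unfolding step2_carnot_def by blast
  then have "{f. affine_map_on f} \<subseteq> {f. horiz_affine br f}"
    using affine_map_on_imp_horiz_affine by blast
  moreover have "horiz_affine br ?F"
    using \<open>linear p1\<close> \<open>linear p2\<close> wedge horiz_affine_f3_volume
    by (rule horiz_affine_comp_carnot_morphism)
  moreover have "\<not> affine_map_on ?F"
    using \<open>linear p1\<close> \<open>linear p2\<close> surj by (rule not_affine_map_on_f3_volume_comp)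
  ultimately show ?thesis
    by blast
qed

end
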